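(* Consider an ROS system with $n$ bidders in the smooth limit, and let $\phi$ be the flow of the differential equation $\frac{dm_i}{dt}=U_i(m)$, $i=1,\dots,n$. Then the set $[1,\infty)^n\subset\mathbb R^n$ is positively invariant with respect to $\phi$, i.e. $\phi(t,[1,\infty)^n)\subseteq[1,\infty)^n$ for all $t\ge 0$.
   Context: ROS system: $n$ bidders, $k$ items; bidder $i$ uses multiplier $m_i$ and bids $b_{ij}=m_iv_{ij}$ on item $j$. Each item is sold by a second-price auction with uniform random tie-breaking: the highest bid wins (ties split uniformly), allocation $x_{ij}\in[0,1]$ is the winning probability and payment $p_{ij}=x_{ij}\max_{s\ne i}b_{sj}$. Smooth limit: the valuation vector $v=(v_{ij})$ is random with a positive $C^1$ density on a box $[0,M]^{nk}$ and $U_i(m)=\mathbb E[\sum_j v_{ij}x_{ij}(m)-p_{ij}(m)]$, which is a $C^1$ function of $m$. A set $S$ is positively invariant for a flow $\phi$ if $\phi(t,S)\subseteq S$ for all $t\ge 0$. *)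

theory Defs
  imports "HOL-Analysis.Analysis"
begin

text \<open>Valuation profiles: v $ i $ j is the value of bidder i for item j.
  Bids: b $ i $ j = m $ i * v $ i $ j.\<close>

definition bids :: "real^'n \<Rightarrow> real^'k^'n \<Rightarrow> real^'k^'n" where
  "bids m v = (\<chi> i j. m $ i * v $ i $ j)"

text \<open>Winners of item j (highest bid), uniform random tie-breaking.\<close>
definition winners :: "real^'k^'n \<Rightarrow> 'k \<Rightarrow> 'n set" where
  "winners b j = {s. b $ s $ j = (MAX s'. b $ s' $ j)}"

definition alloc :: "real^'k^'n \<Rightarrow> 'n \<Rightarrow> 'k \<Rightarrow> real" where
  "alloc b i j = (if i \<in> winners b j then 1 / real (card (winners b j)) else 0)"

definition pay :: "real^'k^'n \<Rightarrow> 'n \<Rightarrow> 'k \<Rightarrow> real" where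
  "pay b i j = alloc b i j * Max {b $ s $ j | s. s \<noteq> i}"

definition val_box :: "real \<Rightarrow> (real^'k^'n) set" where
  "val_box M = cbox 0 (\<chi> i j. M)"

text \<open>Expected utility of bidder i in the smooth limit, v having density f
  supported on the box [0,M]^{nk}.\<close>
definition U :: "(real^'k^'n \<Rightarrow> real) \<Rightarrow> real \<Rightarrow> real^'n \<Rightarrow> 'n \<Rightarrow> real" where
  "U f M m i = integral (val_box M)
     (\<lambda>v. f v * (\<Sum>j\<in>UNIV. v $ i $ j * alloc (bids m v) i j - pay (bids m v) i j))"

definition Uvec :: "(real^'k^'n \<Rightarrow> real) \<Rightarrow> real \<Rightarrow> real^'n \<Rightarrow> real^'n" where
  "Uvec f M m = (\<chi> i. U f M m i)"

definition C1_on :: "'a::euclidean_space set \<Rightarrow> ('a \<Rightarrow> 'b::real_normed_vector) \<Rightarrow> bool" where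
  "C1_on S g \<longleftrightarrow> (\<exists>D. (\<forall>x\<in>S. (g has_derivative blinfun_apply (D x)) (at x within S))
                      \<and> continuous_on S D)"

end

theory Submission
  imports Defs
begin

text \<open>A bidder with multiplier at most 1 never bids above its value, and in a second-price
  auction the price paid by a winner is at most its own bid; so each item yields nonnegative
  utility and \<open>U\<^sub>i(m) \<ge> 0\<close> whenever \<open>m\<^sub>i \<le> 1\<close>. Along a solution, a coordinate \<open>m\<^sub>i\<close> that
  starts at or above 1 is therefore nondecreasing whenever it is below 1, so it can never
  drop below 1.\<close>

lemma Max_competing_bid_le_winning_bid:
  fixes b :: "real^'k^'n"
  assumes win: "i \<in> winners b j" and competitor: "\<exists>s. s \<noteq> i"
  shows "Max {b $ s $ j | s. s \<noteq> i} \<le> b $ i $ j"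
proof -
  have "b $ i $ j = (MAX s. b $ s $ j)"
    using win by (simp add: winners_def)
  then show ?thesis
    using competitor by auto
qed

lemma item_utility_nonneg_if_bid_le_value:
  fixes b :: "real^'k^'n"
  assumes competitor: "\<exists>s. s \<noteq> i" and bid: "b $ i $ j \<le> w"
  shows "0 \<le> w * alloc b i j - pay b i j"
proof (cases "i \<in> winners b j")
  case True
  then have "Max {b $ s $ j | s. s \<noteq> i} \<le> w"
    using Max_competing_bid_le_winning_bid[OF _ competitor] bid by force
  then have "0 \<le> alloc b i j * (w - Max {b $ s $ j | s. s \<noteq> i})"
    by (simp add: alloc_def)
  then show ?thesis
    by (simp add: pay_def algebra_simps)
qed (simp add: alloc_def pay_def)

lemma U_nonneg_if_multiplier_le_1:
  fixes f :: "real^'k^'n \<Rightarrow> real" and m :: "real^'n"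
  assumes n2: "CARD('n) \<ge> 2" and f_nonneg: "\<forall>v\<in>val_box M. 0 \<le> f v" and mi: "m $ i \<le> 1"
  shows "0 \<le> U f M m i"
proof -
  have competitor: "\<exists>s::'n. s \<noteq> i"
  proof (rule ccontr)
    assume "\<nexists>s. s \<noteq> i"
    then have "(UNIV :: 'n set) = {i}"
      by auto
    then show False
      using n2 by (metis card_1_singleton_iff One_nat_def numeral_le_one_iff semiring_norm(69))
  qed
  let ?g = "\<lambda>v. f v * (\<Sum>j\<in>UNIV. v $ i $ j * alloc (bids m v) i j - pay (bids m v) i j)"
  have "0 \<le> ?g v" if v: "v \<in> val_box M" for v
  proof -
    have "0 \<le> v $ i $ j" for j
      using v by (simp add: val_box_def cbox_interval less_eq_vec_def)
    then have "bids m v $ i $ j \<le> v $ i $ j" for j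
      using mult_right_mono[OF mi] by (simp add: bids_def)
    then have "0 \<le> (\<Sum>j\<in>UNIV. v $ i $ j * alloc (bids m v) i j - pay (bids m v) i j)"
      by (intro sum_nonneg item_utility_nonneg_if_bid_le_value[OF competitor])
    then show ?thesis
      using f_nonneg v by simp
  qed
  then show ?thesis
    unfolding U_def
    by (cases "?g integrable_on val_box M") (auto intro: integral_nonneg simp: not_integrable_integral)
qed

text \<open>The last time \<open>s\<close> at which \<open>g \<ge> c\<close> exists by closedness; on \<open>(s, t)\<close> the function is
  below \<open>c\<close>, hence nondecreasing, so \<open>g t \<ge> g s \<ge> c\<close>.\<close>

lemma ge_if_deriv_nonneg_below:
  fixes g g' :: "real \<Rightarrow> real"
  assumes deriv: "\<And>\<tau>. \<tau> \<in> {a..b} \<Longrightarrow> (g has_real_derivative g' \<tau>) (at \<tau> within {a..b})"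
    and start: "c \<le> g a"
    and push: "\<And>\<tau>. \<tau> \<in> {a..b} \<Longrightarrow> g \<tau> < c \<Longrightarrow> 0 \<le> g' \<tau>"
    and t: "t \<in> {a..b}"
  shows "c \<le> g t"
proof (rule ccontr)
  assume below: "\<not> c \<le> g t"
  have "continuous_on {a..b} g"
    using deriv by (rule DERIV_continuous_on)
  then have cont: "continuous_on {a..t} g"
    by (rule continuous_on_subset) (use t in auto)
  define S where "S = {\<tau> \<in> {a..t}. c \<le> g \<tau>}"
  have "closed S"
    unfolding S_def by (rule continuous_on_closed_Collect_le[OF continuous_on_const cont]) simp
  moreover have "a \<in> S" "bdd_above S"
    using start t by (auto simp: S_def)
  ultimately have sS: "Sup S \<in> S"
    using closed_contains_Sup by blast
  define s where "s = Sup S"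
  have s: "a \<le> s" "s < t" "c \<le> g s"
    using sS below by (auto simp: S_def s_def less_le)
  have after_s: "g \<tau> < c" if "s < \<tau>" "\<tau> \<le> t" for \<tau>
    using cSup_upper[of \<tau> S] \<open>bdd_above S\<close> that s by (force simp: S_def s_def)
  have "g s \<le> g t"
  proof (rule DERIV_nonneg_imp_increasing_open[of s t g])
    fix x assume x: "s < x" "x < t"
    then have "at x within {a..b} = at x"
      using s t by (intro at_within_Icc_at) auto
    then show "\<exists>y. (g has_real_derivative y) (at x) \<and> 0 \<le> y"
      using deriv[of x] push[of x] after_s[of x] x s t by auto
  next
    show "continuous_on {s..t} g"
      using cont by (rule continuous_on_subset) (use s in auto)
  qed (use s in simp)
  then show False
    using s below by simp
qed

theorem lemma2:
  fixes f :: "real^'k^'n \<Rightarrow> real" and M :: real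
    and \<phi> :: "real \<Rightarrow> real^'n" and T :: real
  assumes n2: "CARD('n) \<ge> 2"
    and M: "M > 0"
    and fpos: "\<forall>v\<in>val_box M. f v > 0"
    and fC1: "C1_on (val_box M) f"
    and fint: "f integrable_on val_box M"
    and fnorm: "integral (val_box M) f = 1"
    and UC1: "C1_on {m :: real^'n. \<forall>i. m $ i > 0} (Uvec f M)"
    and T: "T \<ge> 0"
    and sol: "\<forall>t\<in>{0..T}. (\<phi> has_vector_derivative Uvec f M (\<phi> t)) (at t within {0..T})"
    and init: "\<phi> 0 \<in> {m. \<forall>i. m $ i \<ge> 1}"
  shows "\<forall>t\<in>{0..T}. \<phi> t \<in> {m. \<forall>i. m $ i \<ge> 1}"
proof (intro ballI CollectI allI)
  fix t i assume t: "t \<in> {0..T}"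
  have f_nonneg: "\<forall>v\<in>val_box M. 0 \<le> f v"
    using fpos by (simp add: less_imp_le)
  have "((\<lambda>\<tau>. \<phi> \<tau> $ i) has_real_derivative U f M (\<phi> \<tau>) i) (at \<tau> within {0..T})"
    if "\<tau> \<in> {0..T}" for \<tau>
    using bounded_linear.has_vector_derivative[OF bounded_linear_vec_nth sol[rule_format, OF that]]
    by (simp add: Uvec_def has_real_derivative_iff_has_vector_derivative)
  moreover have "0 \<le> U f M (\<phi> \<tau>) i" if "\<phi> \<tau> $ i < 1" for \<tau>
    using U_nonneg_if_multiplier_le_1[OF n2 f_nonneg] that by simp
  ultimately show "1 \<le> \<phi> t $ i"
    using ge_if_deriv_nonneg_below[of 0 T "\<lambda>\<tau>. \<phi> \<tau> $ i" "\<lambda>\<tau>. U f M (\<phi> \<tau>) i" 1 t] init t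
    by simp
qed

end
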